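(* Consider a credit-attribution game in which every paper has exactly two authors, and the fractional attack model on player $x$ in the reliability extension of the full obligation game $\Gamma_{FO}$, with fixed $p_x\in[0,1]$, baseline reliabilities $p^*_l\in(0,1]$, cost slopes $L_l,R_l>0$ and budget $B\ge0$. Then the following profile is an optimal attack: sort the coauthors $l\in CA(x)$ in decreasing order of $C(x,l)/L_l$ (ties broken arbitrarily); for $i=1,\dots,|CA(x)|$ in turn, decrease the reliability of the $i$-th coauthor to $0$ while the remaining budget allows it; when the remaining budget does not allow decreasing it to $0$, decrease it as much as the remaining budget allows; leave all other reliabilities at their baseline values.
   Context: Credit-attribution game: authors $N=\{1,\dots,n\}$, papers $P_k$ with author sets $Auth_k$ and weights $w_k\in\mathbb{R}_+$. $CA(x)$ is the set of coauthors of $x$; for $l\in CA(x)$, $C(x,l)=\sum w_k$ over papers authored by both $x$ and $l$. $v_{FO}(S)=\sum\{w_k:Auth_k\subseteq S\}$. For $T\subseteq S$, $\Pi_{T,S}=\prod_{i\in T}p_i\prod_{i\in S\setminus T}(1-p_i)$; reliability extension $\overline v(S)=\sum_{T\subseteq S}v(T)\Pi_{T,S}$. Shapley value $Sh[v](x)=\frac1{n!}\sum_\pi[v(S^x_\pi\cup\{x\})-v(S^x_\pi)]$, $S^x_\pi$ the players preceding $x$ in $\pi$. Fractional attack on $x$: $p_x$ fixed; for each $j\ne x$ choose $p_j\in[0,1]$ at cost $u_j(p_j)=L_j(p^*_j-p_j)$ if $p_j<p^*_j$, $R_j(p_j-p^*_j)$ if $p_j\ge p^*_j$; feasible if $\sum_{j\ne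 x}u_j(p_j)\le B$; an optimal attack is a feasible profile minimizing $Sh[\overline{v_{FO}}](x)$. *)

theory Defs
  imports Complex_Main
begin

text \<open>Credit-attribution game: authors N, papers K, author sets Auth k, weights w k.\<close>

definition coauthors :: "'k set \<Rightarrow> ('k \<Rightarrow> 'a set) \<Rightarrow> 'a set \<Rightarrow> 'a \<Rightarrow> 'a set" where
  "coauthors K Auth N x = {l \<in> N. l \<noteq> x \<and> (\<exists>k\<in>K. x \<in> Auth k \<and> l \<in> Auth k)}"

definition coweight :: "'k set \<Rightarrow> ('k \<Rightarrow> 'a set) \<Rightarrow> ('k \<Rightarrow> real) \<Rightarrow> 'a \<Rightarrow> 'a \<Rightarrow> real" where
  "coweight K Auth w x l = (\<Sum>k\<in>{k\<in>K. x \<in> Auth k \<and> l \<in> Auth k}. w k)"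

definition v_FO :: "'k set \<Rightarrow> ('k \<Rightarrow> 'a set) \<Rightarrow> ('k \<Rightarrow> real) \<Rightarrow> 'a set \<Rightarrow> real" where
  "v_FO K Auth w S = (\<Sum>k\<in>{k\<in>K. Auth k \<subseteq> S}. w k)"

definition rel_ext :: "('a \<Rightarrow> real) \<Rightarrow> ('a set \<Rightarrow> real) \<Rightarrow> 'a set \<Rightarrow> real" where
  "rel_ext p v S = (\<Sum>T\<in>Pow S. v T * (\<Prod>i\<in>T. p i) * (\<Prod>i\<in>S - T. 1 - p i))"

definition orderings :: "'a set \<Rightarrow> 'a list set" where
  "orderings N = {xs. distinct xs \<and> set xs = N}"

definition preceding :: "'a list \<Rightarrow> 'a \<Rightarrow> 'a set" where
  "preceding xs x = set (takeWhile (\<lambda>y. y \<noteq> x) xs)"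

definition shapley :: "'a set \<Rightarrow> ('a set \<Rightarrow> real) \<Rightarrow> 'a \<Rightarrow> real" where
  "shapley N v x = (1 / fact (card N)) *
     (\<Sum>\<pi>\<in>orderings N. v (insert x (preceding \<pi> x)) - v (preceding \<pi> x))"

definition attack_cost :: "('a \<Rightarrow> real) \<Rightarrow> ('a \<Rightarrow> real) \<Rightarrow> ('a \<Rightarrow> real) \<Rightarrow> 'a \<Rightarrow> real \<Rightarrow> real" where
  "attack_cost L R pstar j q = (if q < pstar j then L j * (pstar j - q) else R j * (q - pstar j))"

definition feasible_attack ::
  "'a set \<Rightarrow> 'a \<Rightarrow> real \<Rightarrow> ('a \<Rightarrow> real) \<Rightarrow> ('a \<Rightarrow> real) \<Rightarrow> ('a \<Rightarrow> real) \<Rightarrow> real \<Rightarrow> ('a \<Rightarrow> real) \<Rightarrow> bool" where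
  "feasible_attack N x px pstar L R B p \<longleftrightarrow>
     p x = px \<and> (\<forall>j\<in>N - {x}. 0 \<le> p j \<and> p j \<le> 1) \<and>
     (\<Sum>j\<in>N - {x}. attack_cost L R pstar j (p j)) \<le> B"

definition optimal_attack ::
  "'k set \<Rightarrow> ('k \<Rightarrow> 'a set) \<Rightarrow> ('k \<Rightarrow> real) \<Rightarrow> 'a set \<Rightarrow> 'a \<Rightarrow> real \<Rightarrow> ('a \<Rightarrow> real) \<Rightarrow>
   ('a \<Rightarrow> real) \<Rightarrow> ('a \<Rightarrow> real) \<Rightarrow> real \<Rightarrow> ('a \<Rightarrow> real) \<Rightarrow> bool" where
  "optimal_attack K Auth w N x px pstar L R B p \<longleftrightarrow>
     feasible_attack N x px pstar L R B p \<and>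
     (\<forall>q. feasible_attack N x px pstar L R B q \<longrightarrow>
        shapley N (rel_ext p (v_FO K Auth w)) x \<le> shapley N (rel_ext q (v_FO K Auth w)) x)"

fun greedy_profile :: "('a \<Rightarrow> real) \<Rightarrow> ('a \<Rightarrow> real) \<Rightarrow> real \<Rightarrow> 'a list \<Rightarrow> ('a \<Rightarrow> real)" where
  "greedy_profile L pstar b [] = pstar"
| "greedy_profile L pstar b (l # ls) =
     (let d = min (pstar l) (b / L l)
      in (greedy_profile L pstar (b - L l * d) ls)(l := pstar l - d))"

end

theory Submission
  imports Defs "HOL-Combinatorics.Transposition"
begin

text \<open>With two authors per paper, the marginal contribution of x to a coalition S in the
  reliability extension of the full obligation game is p x times the sum of C(x,l) p l over
  the coauthors l in S. Transposing two players other than x permutes the orderings, so every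
  coauthor precedes x in equally many orderings, and the Shapley value of x becomes
  c * p x * (\<Sum>l. C(x,l) p l) with c \<ge> 0 independent of the profile p. Minimizing it is a
  fractional knapsack problem: lowering p l by e costs at least L l * e and gains C(x,l) * e,
  so spending the budget in order of decreasing C(x,l) / L l is optimal.\<close>

lemma sum_Pow_superset_prod:
  fixes p :: "'a \<Rightarrow> 'b::comm_ring_1"
  assumes "finite S" "A \<subseteq> S"
  shows "(\<Sum>T\<in>Pow S. if A \<subseteq> T then (\<Prod>i\<in>T. p i) * (\<Prod>i\<in>S - T. 1 - p i) else 0) = prod p A"
proof -
  define g where "g i = (if i \<in> A then 0 else 1 - p i)" for i
  have "prod p A = (\<Prod>i\<in>S. if i \<in> A then p i else 1)"
    using assms by (simp add: prod.If_cases Int_absorb1 Int_absorb2)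
  also have "\<dots> = (\<Prod>i\<in>S. p i + g i)"
    by (rule prod.cong) (auto simp: g_def)
  also have "\<dots> = (\<Sum>T\<in>Pow S. prod p T * prod g (S - T))"
    using assms(1) by (rule prod_add)
  also have "\<dots> = (\<Sum>T\<in>Pow S. if A \<subseteq> T then prod p T * (\<Prod>i\<in>S - T. 1 - p i) else 0)"
  proof (rule sum.cong[OF refl])
    fix T assume "T \<in> Pow S"
    show "prod p T * prod g (S - T) = (if A \<subseteq> T then prod p T * (\<Prod>i\<in>S - T. 1 - p i) else 0)"
    proof (cases "A \<subseteq> T")
      case True
      then have "prod g (S - T) = (\<Prod>i\<in>S - T. 1 - p i)"
        by (intro prod.cong) (auto simp: g_def)
      then show ?thesis using True by simp
    next
      case False
      then obtain i where "i \<in> A - T" by blast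
      then have "prod g (S - T) = 0"
        using assms by (intro prod_zero) (auto simp: g_def)
      then show ?thesis using False by simp
    qed
  qed
  finally show ?thesis by simp
qed

lemma rel_ext_v_FO:
  assumes "finite S" "finite K"
  shows "rel_ext p (v_FO K Auth w) S = (\<Sum>k\<in>K. if Auth k \<subseteq> S then w k * prod p (Auth k) else 0)"
proof -
  define P where "P T = (\<Prod>i\<in>T. p i) * (\<Prod>i\<in>S - T. 1 - p i)" for T
  have "rel_ext p (v_FO K Auth w) S = (\<Sum>T\<in>Pow S. \<Sum>k\<in>K. if Auth k \<subseteq> T then w k * P T else 0)"
    unfolding rel_ext_def v_FO_def P_def sum.inter_filter[OF assms(2)]
    by (auto simp: sum_distrib_right intro!: sum.cong)
  also have "\<dots> = (\<Sum>k\<in>K. w k * (\<Sum>T\<in>Pow S. if Auth k \<subseteq> T then P T else 0))"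
    by (subst sum.swap) (simp add: sum_distrib_left if_distrib cong: if_cong)
  also have "\<dots> = (\<Sum>k\<in>K. if Auth k \<subseteq> S then w k * prod p (Auth k) else 0)"
  proof (intro sum.cong refl)
    fix k
    show "w k * (\<Sum>T\<in>Pow S. if Auth k \<subseteq> T then P T else 0) =
      (if Auth k \<subseteq> S then w k * prod p (Auth k) else 0)"
    proof (cases "Auth k \<subseteq> S")
      case True
      then show ?thesis unfolding P_def by (simp add: sum_Pow_superset_prod assms(1))
    next
      case False
      then have "\<not> Auth k \<subseteq> T" if "T \<in> Pow S" for T using that by blast
      then show ?thesis using False by simp
    qed
  qed
  finally show ?thesis .
qed

lemma rel_ext_v_FO_insert_diff:
  assumes "finite S" "finite K" "x \<notin> S"
  shows "rel_ext p (v_FO K Auth w) (insert x S) - rel_ext p (v_FO K Auth w) S =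
    (\<Sum>k\<in>{k\<in>K. x \<in> Auth k \<and> Auth k \<subseteq> insert x S}. w k * prod p (Auth k))"
proof -
  have "rel_ext p (v_FO K Auth w) (insert x S) - rel_ext p (v_FO K Auth w) S =
     (\<Sum>k\<in>K. if x \<in> Auth k \<and> Auth k \<subseteq> insert x S then w k * prod p (Auth k) else 0)"
    unfolding rel_ext_v_FO[OF assms(1,2)] rel_ext_v_FO[OF finite_insert[THEN iffD2, OF assms(1)] assms(2)]
      sum_subtractf[symmetric]
    using assms(3) by (intro sum.cong refl) (auto simp: subset_insert)
  then show ?thesis by (simp add: sum.inter_filter[OF assms(2)])
qed

lemma sum_two_author_papers:
  assumes "finite N" "finite K" "\<And>k. k \<in> K \<Longrightarrow> Auth k \<subseteq> N"
    "\<And>k. k \<in> K \<Longrightarrow> card (Auth k) = 2"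
  shows "(\<Sum>k\<in>{k\<in>K. x \<in> Auth k \<and> Auth k \<subseteq> insert x S}. w k * prod p (Auth k)) =
    p x * (\<Sum>l\<in>coauthors K Auth N x \<inter> S. coweight K Auth w x l * p l)"
proof -
  let ?CA = "coauthors K Auth N x \<inter> S"
  have fin: "finite ?CA" using assms(1) by (auto simp: coauthors_def)
  have "p x * (\<Sum>l\<in>?CA. coweight K Auth w x l * p l) =
      (\<Sum>l\<in>?CA. \<Sum>k\<in>{k\<in>K. x \<in> Auth k \<and> l \<in> Auth k}. w k * (p x * p l))"
    by (simp add: coweight_def sum_distrib_left sum_distrib_right mult_ac)
  also have "\<dots> = (\<Sum>k\<in>K. \<Sum>l\<in>{l\<in>?CA. x \<in> Auth k \<and> l \<in> Auth k}. w k * (p x * p l))"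
    using sum.swap_restrict[OF fin assms(2)] by simp
  also have "\<dots> = (\<Sum>k\<in>K. if x \<in> Auth k \<and> Auth k \<subseteq> insert x S then w k * prod p (Auth k) else 0)"
  proof (intro sum.cong refl)
    fix k assume k: "k \<in> K"
    show "(\<Sum>l\<in>{l\<in>?CA. x \<in> Auth k \<and> l \<in> Auth k}. w k * (p x * p l)) =
      (if x \<in> Auth k \<and> Auth k \<subseteq> insert x S then w k * prod p (Auth k) else 0)"
    proof (cases "x \<in> Auth k")
      case True
      then obtain y where y: "Auth k = {x, y}" "y \<noteq> x"
        using assms(4)[OF k] by (auto simp: card_2_iff doubleton_eq_iff)
      then have "y \<in> coauthors K Auth N x" using k assms(3)[OF k] by (auto simp: coauthors_def)
      then have "{l\<in>?CA. x \<in> Auth k \<and> l \<in> Auth k} = (if y \<in> S then {y} else {})"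
        using y by (auto simp: coauthors_def)
      then show ?thesis using y by auto
    qed auto
  qed
  finally show ?thesis by (simp add: sum.inter_filter[OF assms(2)])
qed

lemma finite_orderings: "finite N \<Longrightarrow> finite (orderings N)"
  by (rule finite_subset[OF _ finite_subset_distinct[of N]]) (auto simp: orderings_def)

lemma preceding_subset: "\<pi> \<in> orderings N \<Longrightarrow> preceding \<pi> x \<subseteq> N"
  by (auto simp: preceding_def orderings_def dest: set_takeWhileD)

lemma notin_preceding: "x \<notin> preceding \<pi> x"
  by (auto simp: preceding_def dest: set_takeWhileD)

lemma map_in_orderings: "bij_betw f N N \<Longrightarrow> \<pi> \<in> orderings N \<Longrightarrow> map f \<pi> \<in> orderings N"
  by (auto simp: orderings_def distinct_map bij_betw_def)

lemma preceding_map: "inj f \<Longrightarrow> f x = x \<Longrightarrow> preceding (map f \<pi>) x = f ` preceding \<pi> x"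
proof -
  assume "inj f" "f x = x"
  then have "(\<lambda>y. y \<noteq> x) \<circ> f = (\<lambda>y. y \<noteq> x)"
    by (auto simp: fun_eq_iff) (metis injD)
  then show ?thesis by (simp add: preceding_def takeWhile_map)
qed

lemma card_orderings_preceding_eq:
  assumes "l \<in> N - {x}" "m \<in> N - {x}"
  shows "card {\<pi>\<in>orderings N. l \<in> preceding \<pi> x} = card {\<pi>\<in>orderings N. m \<in> preceding \<pi> x}"
proof (rule bij_betw_same_card)
  let ?f = "Transposition.transpose l m"
  have fx: "?f x = x" using assms by (auto simp: transpose_def)
  have bij: "bij_betw ?f N N" using assms by simp
  show "bij_betw (map ?f) {\<pi>\<in>orderings N. l \<in> preceding \<pi> x} {\<pi>\<in>orderings N. m \<in> preceding \<pi> x}"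
    by (rule bij_betw_byWitness[where f' = "map ?f"])
      (auto simp: comp_def map_in_orderings[OF bij] preceding_map[OF inj_transpose fx]
        in_transpose_image_iff)
qed

lemma shapley_rel_ext_v_FO_two_author:
  assumes "finite N" "finite K" "\<And>k. k \<in> K \<Longrightarrow> Auth k \<subseteq> N"
    "\<And>k. k \<in> K \<Longrightarrow> card (Auth k) = 2"
  shows "\<exists>c\<ge>0. \<forall>p. shapley N (rel_ext p (v_FO K Auth w)) x =
           c * p x * (\<Sum>l\<in>coauthors K Auth N x. coweight K Auth w x l * p l)"
proof -
  let ?CA = "coauthors K Auth N x"
  define cnt where "cnt l = card {\<pi>\<in>orderings N. l \<in> preceding \<pi> x}" for l
  have finCA: "finite ?CA" using assms(1) by (auto simp: coauthors_def)
  obtain n0 where n0: "\<forall>l\<in>?CA. cnt l = n0"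
    using card_orderings_preceding_eq[of _ N x] unfolding cnt_def coauthors_def by blast
  have "shapley N (rel_ext p (v_FO K Auth w)) x =
      real n0 / fact (card N) * p x * (\<Sum>l\<in>?CA. coweight K Auth w x l * p l)" for p
  proof -
    let ?f = "\<lambda>l. coweight K Auth w x l * p l"
    have finS: "finite (preceding \<pi> x)" if "\<pi> \<in> orderings N" for \<pi>
      using assms(1) preceding_subset[OF that] by (rule finite_subset[rotated])
    have "(\<Sum>\<pi>\<in>orderings N. rel_ext p (v_FO K Auth w) (insert x (preceding \<pi> x)) -
                             rel_ext p (v_FO K Auth w) (preceding \<pi> x))
        = (\<Sum>\<pi>\<in>orderings N. p x * (\<Sum>l\<in>?CA \<inter> preceding \<pi> x. ?f l))"
      by (intro sum.cong refl)
        (simp add: rel_ext_v_FO_insert_diff[OF finS assms(2) notin_preceding] sum_two_author_papers[OF assms])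
    also have "\<dots> = p x * (\<Sum>l\<in>?CA. ?f l * cnt l)"
      by (simp add: Int_def sum_distrib_left sum.swap_restrict[OF finite_orderings[OF assms(1)] finCA]
          cnt_def mult_ac)
    also have "\<dots> = real n0 * p x * (\<Sum>l\<in>?CA. ?f l)"
      using n0 by (simp add: sum_distrib_left mult_ac)
    finally show ?thesis by (simp add: shapley_def)
  qed
  then show ?thesis by (intro exI[of _ "real n0 / fact (card N)"]) simp
qed

lemma greedy_profile_notin: "m \<notin> set ls \<Longrightarrow> greedy_profile L pstar b ls m = pstar m"
  by (induction ls arbitrary: b) (auto simp: Let_def)

lemma sum_greedy_profile_Cons:
  fixes L pstar :: "'a \<Rightarrow> real" and b :: real and f :: "'a \<Rightarrow> real \<Rightarrow> 'b::comm_monoid_add"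
  assumes "l \<notin> set ls"
  defines "d \<equiv> min (pstar l) (b / L l)"
  shows "(\<Sum>m\<in>set (l # ls). f m (greedy_profile L pstar b (l # ls) m)) =
    f l (pstar l - d) + (\<Sum>m\<in>set ls. f m (greedy_profile L pstar (b - L l * d) ls m))"
proof -
  have "(\<Sum>m\<in>set ls. f m (greedy_profile L pstar b (l # ls) m)) =
      (\<Sum>m\<in>set ls. f m (greedy_profile L pstar (b - L l * d) ls m))"
    using assms(1) by (intro sum.cong refl) (auto simp: Let_def d_def)
  then show ?thesis using assms(1) by (simp add: Let_def d_def)
qed

lemma greedy_profile_bounds:
  assumes "0 \<le> b" "\<forall>l\<in>set ls. 0 \<le> pstar l \<and> 0 < L l" "m \<in> set ls"
  shows "0 \<le> greedy_profile L pstar b ls m \<and> greedy_profile L pstar b ls m \<le> pstar m"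
  using assms
proof (induction ls arbitrary: b)
  case (Cons l ls)
  define d where "d = min (pstar l) (b / L l)"
  have "0 \<le> d" "d \<le> pstar l" "L l * d \<le> b"
    using Cons.prems by (auto simp: d_def min_def field_simps)
  then show ?case using Cons by (auto simp: Let_def simp flip: d_def)
qed simp

lemma greedy_profile_cost_le:
  assumes "0 \<le> b" "\<forall>l\<in>set ls. 0 \<le> pstar l \<and> 0 < L l" "distinct ls"
  shows "(\<Sum>m\<in>set ls. L m * (pstar m - greedy_profile L pstar b ls m)) \<le> b"
  using assms
proof (induction ls arbitrary: b)
  case (Cons l ls)
  define d where "d = min (pstar l) (b / L l)"
  have "L l * d \<le> b" using Cons.prems by (auto simp: d_def min_def field_simps)
  then show ?case
    using Cons.IH[of "b - L l * d"] Cons.prems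
    by (subst sum_greedy_profile_Cons[where f = "\<lambda>m v. L m * (pstar m - v)"]) (simp_all flip: d_def)
qed simp

text \<open>The slack t strengthens the induction: when e lowers the head l less than the greedy
  step does, the budget it saves moves into the slack of the tail, where every unit is worth
  at most C l / L l.\<close>

lemma greedy_profile_knapsack_slack:
  assumes "distinct ls" "\<forall>l\<in>set ls. 0 < L l \<and> 0 \<le> C l \<and> C l / L l \<le> lam" "0 \<le> lam"
    "sorted_wrt (\<lambda>a b. C a / L a \<ge> C b / L b) ls"
    "\<forall>l\<in>set ls. 0 \<le> e l \<and> e l \<le> pstar l" "0 \<le> t" "(\<Sum>m\<in>set ls. L m * e m) \<le> b + t"
  shows "(\<Sum>m\<in>set ls. C m * e m) \<le>
    (\<Sum>m\<in>set ls. C m * (pstar m - greedy_profile L pstar b ls m)) + lam * t"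
  using assms
proof (induction ls arbitrary: b t lam)
  case (Cons l ls)
  define d where "d = min (pstar l) (b / L l)"
  define b' where "b' = b - L l * d"
  define t' where "t' = t + L l * (d - e l)"
  have l: "0 < L l" "0 \<le> C l" "C l / L l \<le> lam" "e l \<le> pstar l"
    using Cons.prems by auto
  have rest_nonneg: "0 \<le> (\<Sum>m\<in>set ls. L m * e m)"
    using Cons.prems(2,5) by (intro sum_nonneg) auto
  have rest_budget: "(\<Sum>m\<in>set ls. L m * e m) \<le> b' + t'"
    using Cons.prems(1,7) by (simp add: b'_def t'_def algebra_simps)
  have "0 \<le> t'"
  proof (cases "e l \<le> d")
    case True
    then show ?thesis using l(1) Cons.prems(6) by (simp add: t'_def)
  next
    case False
    \<comment> \<open>then the greedy step on l used up the whole budget\<close>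
    then have "b' = 0" using l by (auto simp: d_def b'_def min_def)
    then show ?thesis using rest_budget rest_nonneg by linarith
  qed
  then have IH: "(\<Sum>m\<in>set ls. C m * e m) \<le>
      (\<Sum>m\<in>set ls. C m * (pstar m - greedy_profile L pstar b' ls m)) + C l / L l * t'"
    using Cons.IH[of "C l / L l" t' b'] Cons.prems rest_budget l by auto
  have "C l / L l * t' = C l / L l * t + C l * d - C l * e l"
    using l(1) by (simp add: t'_def field_simps)
  moreover have "C l / L l * t \<le> lam * t"
    using l(3) Cons.prems(6) by (rule mult_right_mono)
  moreover have "(\<Sum>m\<in>set (l # ls). C m * (pstar m - greedy_profile L pstar b (l # ls) m)) =
      C l * d + (\<Sum>m\<in>set ls. C m * (pstar m - greedy_profile L pstar b' ls m))"
    using Cons.prems(1) unfolding d_def b'_def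
    by (subst sum_greedy_profile_Cons[where f = "\<lambda>m v. C m * (pstar m - v)"]) simp_all
  ultimately show ?case using IH Cons.prems(1) by simp
qed simp

lemma greedy_profile_knapsack:
  assumes "distinct ls" "\<forall>l\<in>set ls. 0 < L l \<and> 0 \<le> C l"
    "sorted_wrt (\<lambda>a b. C a / L a \<ge> C b / L b) ls"
    "\<forall>l\<in>set ls. 0 \<le> e l \<and> e l \<le> pstar l" "(\<Sum>m\<in>set ls. L m * e m) \<le> b"
  shows "(\<Sum>m\<in>set ls. C m * e m) \<le> (\<Sum>m\<in>set ls. C m * (pstar m - greedy_profile L pstar b ls m))"
proof -
  let ?lam = "\<Sum>l\<in>set ls. C l / L l"
  have "\<forall>l\<in>set ls. C l / L l \<le> ?lam" "0 \<le> ?lam"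
    using assms(2) by (auto intro!: member_le_sum sum_nonneg)
  then show ?thesis
    using greedy_profile_knapsack_slack[of ls L C ?lam e pstar 0 b] assms by auto
qed

lemma attack_cost_below: "q \<le> pstar j \<Longrightarrow> attack_cost L R pstar j q = L j * (pstar j - q)"
  by (auto simp: attack_cost_def)

lemma attack_cost_nonneg: "0 \<le> L j \<Longrightarrow> 0 \<le> R j \<Longrightarrow> 0 \<le> attack_cost L R pstar j q"
  by (auto simp: attack_cost_def)

lemma attack_cost_ge_decrease:
  "0 \<le> L j \<Longrightarrow> 0 \<le> R j \<Longrightarrow> L j * max (pstar j - q) 0 \<le> attack_cost L R pstar j q"
  by (auto simp: attack_cost_def max_def)

lemma feasible_attack_greedy_profile:
  assumes "finite N" "set ls \<subseteq> N - {x}" "distinct ls" "0 \<le> B"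
    "\<forall>l\<in>N - {x}. 0 \<le> pstar l \<and> pstar l \<le> 1 \<and> 0 < L l"
  shows "feasible_attack N x px pstar L R B ((greedy_profile L pstar B ls)(x := px))"
proof -
  let ?g = "greedy_profile L pstar B ls"
  have pos: "\<forall>l\<in>set ls. 0 \<le> pstar l \<and> 0 < L l" using assms(2,5) by auto
  have bounds: "0 \<le> ?g j \<and> ?g j \<le> pstar j" if "j \<in> N - {x}" for j
    using greedy_profile_bounds[OF assms(4) pos] greedy_profile_notin[of j ls] assms(5) that
    by (cases "j \<in> set ls") auto
  have "(\<Sum>j\<in>N - {x}. attack_cost L R pstar j (?g j)) = (\<Sum>j\<in>N - {x}. L j * (pstar j - ?g j))"
    using bounds by (intro sum.cong refl attack_cost_below) auto
  also have "\<dots> = (\<Sum>j\<in>set ls. L j * (pstar j - ?g j))"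
    using assms(1,2) by (intro sum.mono_neutral_right) (auto simp: greedy_profile_notin)
  also have "\<dots> \<le> B"
    using assms(3,4) pos by (rule greedy_profile_cost_le[rotated 2])
  finally have "(\<Sum>j\<in>N - {x}. attack_cost L R pstar j (?g j)) \<le> B" .
  moreover have "0 \<le> ?g j \<and> ?g j \<le> 1" if "j \<in> N - {x}" for j
    using bounds[OF that] assms(5) that by force
  ultimately show ?thesis by (simp add: feasible_attack_def)
qed

lemma greedy_profile_minimizes_weighted_sum:
  assumes "distinct ls" "\<forall>l\<in>set ls. 0 < L l \<and> 0 \<le> R l \<and> 0 \<le> C l \<and> 0 \<le> pstar l"
    "sorted_wrt (\<lambda>a b. C a / L a \<ge> C b / L b) ls"
    "\<forall>l\<in>set ls. 0 \<le> q l" "(\<Sum>l\<in>set ls. attack_cost L R pstar l (q l)) \<le> b"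
  shows "(\<Sum>l\<in>set ls. C l * greedy_profile L pstar b ls l) \<le> (\<Sum>l\<in>set ls. C l * q l)"
proof -
  define e where "e l = max (pstar l - q l) 0" for l
  have "(\<Sum>l\<in>set ls. L l * e l) \<le> (\<Sum>l\<in>set ls. attack_cost L R pstar l (q l))"
    using assms(2) unfolding e_def by (intro sum_mono attack_cost_ge_decrease) auto
  then have "(\<Sum>l\<in>set ls. C l * e l) \<le>
      (\<Sum>l\<in>set ls. C l * (pstar l - greedy_profile L pstar b ls l))"
    using assms by (intro greedy_profile_knapsack) (auto simp: e_def)
  moreover have "(\<Sum>l\<in>set ls. C l * (pstar l - e l)) \<le> (\<Sum>l\<in>set ls. C l * q l)"
    using assms(2) by (intro sum_mono mult_left_mono) (auto simp: e_def)
  ultimately show ?thesis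
    by (simp add: algebra_simps sum_subtractf sum.distrib)
qed

lemma greedy_profile_le_feasible_attack:
  assumes "finite N" "set ls \<subseteq> N - {x}" "distinct ls"
    "\<forall>l\<in>N - {x}. 0 \<le> pstar l \<and> 0 < L l \<and> 0 \<le> R l" "\<forall>l\<in>set ls. 0 \<le> C l"
    "sorted_wrt (\<lambda>a b. C a / L a \<ge> C b / L b) ls" "feasible_attack N x px pstar L R B q"
  shows "(\<Sum>l\<in>set ls. C l * greedy_profile L pstar B ls l) \<le> (\<Sum>l\<in>set ls. C l * q l)"
proof -
  have "(\<Sum>l\<in>set ls. attack_cost L R pstar l (q l)) \<le> (\<Sum>j\<in>N - {x}. attack_cost L R pstar j (q j))"
    using assms(1,2,4) by (intro sum_mono2 attack_cost_nonneg) (auto intro: less_imp_le)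
  also have "\<dots> \<le> B" using assms(7) by (simp add: feasible_attack_def)
  finally show ?thesis
    using assms(2-7) by (intro greedy_profile_minimizes_weighted_sum[where R = R]) (auto simp: feasible_attack_def)
qed

theorem theorem10:
  fixes K :: "'k set" and Auth :: "'k \<Rightarrow> 'a set" and w :: "'k \<Rightarrow> real"
    and N :: "'a set" and x :: 'a and px B :: real
    and pstar L R :: "'a \<Rightarrow> real" and ls :: "'a list"
  assumes "finite N" and "finite K" and "x \<in> N"
    and "\<And>k. k \<in> K \<Longrightarrow> Auth k \<subseteq> N"
    and "\<And>k. k \<in> K \<Longrightarrow> card (Auth k) = 2"
    and "\<And>k. k \<in> K \<Longrightarrow> w k \<ge> 0"
    and "0 \<le> px" and "px \<le> 1"
    and "\<And>l. l \<in> N - {x} \<Longrightarrow> 0 < pstar l \<and> pstar l \<le> 1"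
    and "\<And>l. l \<in> N - {x} \<Longrightarrow> L l > 0 \<and> R l > 0"
    and "B \<ge> 0"
    and "distinct ls" and "set ls = coauthors K Auth N x"
    and "sorted_wrt (\<lambda>a b. coweight K Auth w x a / L a \<ge> coweight K Auth w x b / L b) ls"
  shows "optimal_attack K Auth w N x px pstar L R B ((greedy_profile L pstar B ls)(x := px))"
proof -
  let ?C = "coweight K Auth w x" and ?CA = "coauthors K Auth N x"
  let ?g = "greedy_profile L pstar B ls"
  have lsN: "set ls \<subseteq> N - {x}" using assms(13) by (auto simp: coauthors_def)
  have C_nonneg: "0 \<le> ?C l" for l using assms(6) by (auto simp: coweight_def intro: sum_nonneg)
  obtain c where c: "0 \<le> c"
    "\<And>q. shapley N (rel_ext q (v_FO K Auth w)) x = c * q x * (\<Sum>l\<in>?CA. ?C l * q l)"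
    using shapley_rel_ext_v_FO_two_author[where Auth = Auth and w = w and x = x, OF assms(1,2,4,5)] by blast
  have pos: "\<forall>l\<in>N - {x}. 0 \<le> pstar l \<and> pstar l \<le> 1 \<and> 0 < L l \<and> 0 \<le> R l"
    using assms(9,10) by force
  have "feasible_attack N x px pstar L R B (?g(x := px))"
    using assms(1,11,12) lsN pos by (intro feasible_attack_greedy_profile) auto
  moreover have "shapley N (rel_ext (?g(x := px)) (v_FO K Auth w)) x \<le> shapley N (rel_ext q (v_FO K Auth w)) x"
    if q: "feasible_attack N x px pstar L R B q" for q
  proof -
    have "(\<Sum>l\<in>?CA. ?C l * (?g(x := px)) l) = (\<Sum>l\<in>set ls. ?C l * ?g l)"
      unfolding assms(13) by (intro sum.cong refl) (auto simp: coauthors_def)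
    also have "\<dots> \<le> (\<Sum>l\<in>?CA. ?C l * q l)"
      unfolding assms(13)[symmetric] using assms(1,12,14) lsN pos C_nonneg q
      by (intro greedy_profile_le_feasible_attack) auto
    finally show ?thesis
      using c q assms(7) by (simp add: feasible_attack_def mult_left_mono)
  qed
  ultimately show ?thesis unfolding optimal_attack_def by blast
qed

end
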